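(* For all $r \in \mathbb{R}^3 \setminus \{0\}$ and all $f_* \in \mathbb{R}^3$, $$f\big(r, c_1(r,f_* ), c_2(r,f_* )\big) = f_*,$$ where $f$, $c_1$, $c_2$ are the functions defined in the context below.
   Context: Notation: $\|\cdot\|$ is the Euclidean norm. For $a=(a_1,a_2,a_3)^{\mathrm T}\in\mathbb{R}^3$, $[a]_\times$ is the skew-symmetric matrix with rows $(0,-a_3,a_2)$, $(a_3,0,-a_1)$, $(-a_2,a_1,0)$, so $[a]_\times b = a\times b$. $\operatorname{sgn}:\mathbb{R}\to\{-1,0,1\}$ is the sign function with $\operatorname{sgn}(0)=0$. Force function: for $r\in\mathbb{R}^3\setminus\{0\}$ and $p,q\in\mathbb{R}^3$, $$f(r,p,q) \triangleq \frac{q^{\mathrm T} r}{\|r\|}\,p + \frac{p^{\mathrm T} r}{\|r\|}\,q + \frac{p^{\mathrm T} q}{\|r\|}\,r - 5\,\frac{(p^{\mathrm T} r)(q^{\mathrm T} r)}{\|r\|^3}\,r.$$ Rotation-like matrix: $R(r,f_* )\in\mathbb{R}^{3\times 3}$ is defined as follows. If $[r]_\times f_*\neq 0$, then $R(r,f_* )$ is the matrix whose three rows are (the transposes of) the column vectors $$\frac{r}{\|r\|},\qquad \frac{(r^{\mathrm T} r) f_* - (r^{\mathrm T} f_* )\, r}{\|r\|\,\|[r]_\times f_*\|},\qquad \frac{[r]_\times f_*}{\|[r]_\times f_*\|};$$ if $[r]_\times f_* = 0$, then $R(r,f_* )$ is the matrix whose first row is $r^{\mathrm T}/\|r\|$ and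 whose second and third rows are zero. Auxiliary scalars: $$\Phi_1(r,f_* ) \triangleq \sqrt{\|[r]_\times f_*\|^2 + \|r\|^2\|f_*\|^2},\qquad \Phi_2(r,f_* ) \triangleq \big(2-\operatorname{sgn}(r^{\mathrm T} f_* )^2\big)\,\Phi_1(r,f_* ),$$ $$a_x \triangleq -\frac{\operatorname{sgn}(r^{\mathrm T} f_* )}{2}\Big(\frac{|r^{\mathrm T} f_*| + \Phi_1}{\|r\|}\Big)^{1/2},\qquad a_y \triangleq \frac{1}{\sqrt2}\Big(\frac{-|r^{\mathrm T} f_*| + \Phi_2}{\|r\|}\Big)^{1/2},$$ $$b_x \triangleq \frac{1}{2}\Big(\frac{|r^{\mathrm T} f_*| + \Phi_2}{\|r\|}\Big)^{1/2},\qquad b_y \triangleq -\frac{\operatorname{sgn}(r^{\mathrm T} f_* )}{\sqrt2}\Big(\frac{-|r^{\mathrm T} f_*| + \Phi_1}{\|r\|}\Big)^{1/2},$$ all evaluated at $(r,f_* )$. Let $a(r,f_* ) \triangleq (a_x, a_y, 0)^{\mathrm T}$ and $b(r,f_* ) \triangleq (b_x,b_y,0)^{\mathrm T}$. Finally $$c_1(r,f_* ) \triangleq R(r,f_* )^{\mathrm T} a(r,f_* ),\qquad c_2(r,f_* ) \triangleq R(r,f_* )^{\mathrm T} b(r,f_* ).$$ *)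

theory Defs
  imports "HOL-Analysis.Analysis"
begin

text \<open>Vectors in R^3 are represented as real^3; cross product is cross3 (HOL-Analysis.Cross3),
  inner product is the Euclidean inner product, sgn on reals satisfies sgn 0 = 0.\<close>

definition force :: "real^3 \<Rightarrow> real^3 \<Rightarrow> real^3 \<Rightarrow> real^3" where
  "force r p q =
     ((q \<bullet> r) / norm r) *\<^sub>R p + ((p \<bullet> r) / norm r) *\<^sub>R q + ((p \<bullet> q) / norm r) *\<^sub>R r
     - (5 * (p \<bullet> r) * (q \<bullet> r) / norm r ^ 3) *\<^sub>R r"

definition Rmat :: "real^3 \<Rightarrow> real^3 \<Rightarrow> real^3^3" where
  "Rmat r fs =
     (if cross3 r fs \<noteq> 0 then
        vector [ (1 / norm r) *\<^sub>R r,
                 (1 / (norm r * norm (cross3 r fs))) *\<^sub>R ((r \<bullet> r) *\<^sub>R fs - (r \<bullet> fs) *\<^sub>R r),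
                 (1 / norm (cross3 r fs)) *\<^sub>R cross3 r fs ]
      else vector [ (1 / norm r) *\<^sub>R r, 0, 0 ])"

definition Phi1 :: "real^3 \<Rightarrow> real^3 \<Rightarrow> real" where
  "Phi1 r fs = sqrt ((norm (cross3 r fs))\<^sup>2 + (norm r)\<^sup>2 * (norm fs)\<^sup>2)"

definition Phi2 :: "real^3 \<Rightarrow> real^3 \<Rightarrow> real" where
  "Phi2 r fs = (2 - (sgn (r \<bullet> fs))\<^sup>2) * Phi1 r fs"

definition ax :: "real^3 \<Rightarrow> real^3 \<Rightarrow> real" where
  "ax r fs = - (sgn (r \<bullet> fs) / 2) * sqrt ((\<bar>r \<bullet> fs\<bar> + Phi1 r fs) / norm r)"

definition ay :: "real^3 \<Rightarrow> real^3 \<Rightarrow> real" where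
  "ay r fs = (1 / sqrt 2) * sqrt ((- \<bar>r \<bullet> fs\<bar> + Phi2 r fs) / norm r)"

definition bx :: "real^3 \<Rightarrow> real^3 \<Rightarrow> real" where
  "bx r fs = (1 / 2) * sqrt ((\<bar>r \<bullet> fs\<bar> + Phi2 r fs) / norm r)"

definition bycomp :: "real^3 \<Rightarrow> real^3 \<Rightarrow> real" where
  "bycomp r fs = - (sgn (r \<bullet> fs) / sqrt 2) * sqrt ((- \<bar>r \<bullet> fs\<bar> + Phi1 r fs) / norm r)"

definition avec :: "real^3 \<Rightarrow> real^3 \<Rightarrow> real^3" where
  "avec r fs = vector [ax r fs, ay r fs, 0]"

definition bvec :: "real^3 \<Rightarrow> real^3 \<Rightarrow> real^3" where
  "bvec r fs = vector [bx r fs, bycomp r fs, 0]"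

definition c1 :: "real^3 \<Rightarrow> real^3 \<Rightarrow> real^3" where
  "c1 r fs = transpose (Rmat r fs) *v avec r fs"

definition c2 :: "real^3 \<Rightarrow> real^3 \<Rightarrow> real^3" where
  "c2 r fs = transpose (Rmat r fs) *v bvec r fs"

end

theory Submission
  imports Defs
begin

text \<open>The rows of \<open>R(r,f\<^sub>*)\<close> are, when \<open>r \<times> f\<^sub>* \<noteq> 0\<close>, an orthonormal frame \<open>r/\<parallel>r\<parallel>, e, r \<times> f\<^sub>*/\<parallel>r \<times> f\<^sub>*\<parallel>\<close>,
  so \<open>c\<^sub>1\<close> and \<open>c\<^sub>2\<close> lie in the plane of \<open>r\<close> and \<open>e\<close> with coordinates \<open>(a\<^sub>x, a\<^sub>y)\<close> and
  \<open>(b\<^sub>x, b\<^sub>y)\<close>. For \<open>p, q\<close> in that plane, \<open>f(r,p,q)\<close> has coordinates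
  \<open>(-2 p\<^sub>1 q\<^sub>1 + p\<^sub>2 q\<^sub>2, p\<^sub>2 q\<^sub>1 + p\<^sub>1 q\<^sub>2)\<close>, while \<open>f\<^sub>*\<close> has coordinates \<open>(d, c) / \<parallel>r\<parallel>\<close> with
  \<open>d = r \<bullet> f\<^sub>*\<close> and \<open>c = \<parallel>r \<times> f\<^sub>*\<parallel>\<close>. The theorem thus reduces to two scalar identities for the
  square roots, which hold because Lagrange's identity gives \<open>\<Phi>\<^sub>1 = sqrt (2 c\<^sup>2 + d\<^sup>2)\<close>, hence
  \<open>(\<Phi>\<^sub>1 + \<bar>d\<bar>)(\<Phi>\<^sub>1 - \<bar>d\<bar>) = 2 c\<^sup>2\<close>; for \<open>d = 0\<close> the factor \<open>\<Phi>\<^sub>2 = 2 \<Phi>\<^sub>1\<close> takes over.\<close>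

lemma transpose_rows_mult_vector3:
  "transpose (vector [u, v, w] :: real^3^3) *v (vector [a, b, c] :: real^3)
     = a *\<^sub>R u + b *\<^sub>R v + c *\<^sub>R w"
  by (simp add: vec_eq_iff matrix_vector_mult_def transpose_def sum_3 forall_3)

lemma force_in_plane:
  fixes r e :: "real^3"
  assumes "r \<noteq> 0" and "e \<bullet> r = 0"
  shows "force r ((a1 / norm r) *\<^sub>R r + a2 *\<^sub>R e) ((b1 / norm r) *\<^sub>R r + b2 *\<^sub>R e)
     = ((-2 * a1 * b1 + a2 * b2 * (e \<bullet> e)) / norm r) *\<^sub>R r + (a2 * b1 + a1 * b2) *\<^sub>R e"
proof -
  define N where "N = norm r"
  have N: "N > 0" using assms N_def by simp
  have rr: "r \<bullet> r = N\<^sup>2" by (simp add: N_def power2_norm_eq_inner)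
  have er: "r \<bullet> e = 0" using assms by (simp add: inner_commute)
  have "((a1 / N) *\<^sub>R r + a2 *\<^sub>R e) \<bullet> r = a1 * N"
    and "((b1 / N) *\<^sub>R r + b2 *\<^sub>R e) \<bullet> r = b1 * N"
    and "((a1 / N) *\<^sub>R r + a2 *\<^sub>R e) \<bullet> ((b1 / N) *\<^sub>R r + b2 *\<^sub>R e) = a1 * b1 + a2 * b2 * (e \<bullet> e)"
    using N by (simp_all add: inner_add_left inner_add_right assms er rr power2_eq_square)
  then show ?thesis
    unfolding force_def N_def[symmetric]
    using N by (simp add: vec_eq_iff field_simps power3_eq_cube)
qed

lemma norm_scaled_rejection:
  fixes r f :: "real^3"
  shows "norm ((r \<bullet> r) *\<^sub>R f - (r \<bullet> f) *\<^sub>R r) = norm r * norm (cross3 r f)"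
proof -
  have "(norm ((r \<bullet> r) *\<^sub>R f - (r \<bullet> f) *\<^sub>R r))\<^sup>2 = (r \<bullet> r) * ((r \<bullet> r) * (f \<bullet> f) - (r \<bullet> f)\<^sup>2)"
    unfolding power2_norm_eq_inner
    by (simp add: inner_diff_left inner_diff_right inner_commute algebra_simps power2_eq_square)
  also have "\<dots> = (norm r * norm (cross3 r f))\<^sup>2"
  proof -
    have "(norm (cross3 r f))\<^sup>2 = (r \<bullet> r) * (f \<bullet> f) - (r \<bullet> f)\<^sup>2"
      using norm_cross_dot[of r f] by (simp add: power_mult_distrib power2_norm_eq_inner)
    then show ?thesis
      by (simp add: power_mult_distrib power2_norm_eq_inner)
  qed
  finally show ?thesis
    by (simp add: power2_eq_iff_nonneg)
qed

text \<open>When \<open>r \<times> f = 0\<close> the division by zero makes this \<open>0\<close>, which is exactly the degenerate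
  second row of \<^const>\<open>Rmat\<close>; so \<open>Rmat_eq\<close> below needs no case split.\<close>

definition perp_dir :: "real^3 \<Rightarrow> real^3 \<Rightarrow> real^3" where
  "perp_dir r f = (1 / (norm r * norm (cross3 r f))) *\<^sub>R ((r \<bullet> r) *\<^sub>R f - (r \<bullet> f) *\<^sub>R r)"

lemma perp_dir_orthogonal: "perp_dir r f \<bullet> r = 0"
  unfolding perp_dir_def by (simp add: inner_diff_left inner_diff_right inner_commute)

lemma perp_dir_unit:
  assumes "cross3 r f \<noteq> 0"
  shows "perp_dir r f \<bullet> perp_dir r f = 1"
proof -
  have "norm r \<noteq> 0" using assms by auto
  then have "norm (perp_dir r f) = 1"
    using assms by (simp add: perp_dir_def norm_scaled_rejection)
  then show ?thesis by (simp add: norm_eq_1)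
qed

lemma orthogonal_decomposition:
  fixes r f :: "real^3"
  assumes "r \<noteq> 0"
  shows "f = ((r \<bullet> f) / (norm r)\<^sup>2) *\<^sub>R r + (norm (cross3 r f) / norm r) *\<^sub>R perp_dir r f"
proof -
  have rr: "r \<bullet> r = (norm r)\<^sup>2" by (simp add: power2_norm_eq_inner)
  have "(norm (cross3 r f) / norm r) *\<^sub>R perp_dir r f
      = (1 / (norm r)\<^sup>2) *\<^sub>R ((r \<bullet> r) *\<^sub>R f - (r \<bullet> f) *\<^sub>R r)"
  proof (cases "cross3 r f = 0")
    case True
    then show ?thesis
      using norm_scaled_rejection[of r f] by (simp add: perp_dir_def)
  next
    case False
    then show ?thesis
      using assms by (simp add: perp_dir_def power2_eq_square)
  qed
  then show ?thesis
    using assms by (simp add: rr scaleR_diff_right)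
qed

lemma Rmat_eq:
  "Rmat r f = vector [(1 / norm r) *\<^sub>R r, perp_dir r f, (1 / norm (cross3 r f)) *\<^sub>R cross3 r f]"
  by (simp add: Rmat_def perp_dir_def)

lemma c1_eq: "c1 r f = (ax r f / norm r) *\<^sub>R r + ay r f *\<^sub>R perp_dir r f"
  unfolding c1_def Rmat_eq avec_def transpose_rows_mult_vector3 by simp

lemma c2_eq: "c2 r f = (bx r f / norm r) *\<^sub>R r + bycomp r f *\<^sub>R perp_dir r f"
  unfolding c2_def Rmat_eq bvec_def transpose_rows_mult_vector3 by simp

lemma planar_coefficients:
  fixes N c d :: real
  assumes N: "N > 0" and c: "c \<ge> 0"
  defines "P \<equiv> sqrt (2 * c\<^sup>2 + d\<^sup>2)"
  defines "Q \<equiv> (2 - (sgn d)\<^sup>2) * P"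
  defines "a1 \<equiv> - (sgn d / 2) * sqrt ((\<bar>d\<bar> + P) / N)"
    and "a2 \<equiv> (1 / sqrt 2) * sqrt ((- \<bar>d\<bar> + Q) / N)"
    and "b1 \<equiv> (1 / 2) * sqrt ((\<bar>d\<bar> + Q) / N)"
    and "b2 \<equiv> - (sgn d / sqrt 2) * sqrt ((- \<bar>d\<bar> + P) / N)"
  shows "-2 * a1 * b1 + a2 * b2 = d / N"
    and "a2 * b1 + a1 * b2 = c / N"
    and "c = 0 \<Longrightarrow> b2 = 0"
proof -
  have PP: "P\<^sup>2 = 2 * c\<^sup>2 + d\<^sup>2" unfolding P_def by simp
  have dP: "\<bar>d\<bar> \<le> P" unfolding P_def by (rule real_le_rsqrt) simp
  define X where "X = (\<bar>d\<bar> + P) / N"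
  define Y where "Y = (P - \<bar>d\<bar>) / N"
  have XY_nonneg: "X \<ge> 0" "Y \<ge> 0" using dP N by (auto simp: X_def Y_def)
  have "X * Y = 2 * c\<^sup>2 / N\<^sup>2"
    unfolding X_def Y_def using PP by (simp add: field_simps power2_eq_square)
  then have sqrt_XY: "sqrt X * sqrt Y = sqrt 2 * c / N"
    unfolding real_sqrt_mult[symmetric] using N c by (simp add: real_sqrt_divide real_sqrt_mult)
  show "c = 0 \<Longrightarrow> b2 = 0"
  proof -
    assume "c = 0"
    then have "P = \<bar>d\<bar>" by (simp add: P_def)
    then show "b2 = 0" by (simp add: b2_def)
  qed
  have "-2 * a1 * b1 + a2 * b2 = d / N \<and> a2 * b1 + a1 * b2 = c / N"
  proof (cases "d = 0")
    case True
    have "P = sqrt 2 * c" unfolding P_def True using c by (simp add: real_sqrt_mult)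
    moreover have "sqrt (2 * P / N) * sqrt (2 * P / N) = 2 * P / N" using dP N by simp
    ultimately show ?thesis
      using N by (simp add: True a1_def a2_def b1_def b2_def Q_def field_simps)
  next
    case False
    then have sgn_sq: "(sgn d)\<^sup>2 = 1" by (simp add: sgn_if)
    then have coeffs: "a1 = - (sgn d / 2) * sqrt X" "b1 = 1 / 2 * sqrt X"
      "a2 = 1 / sqrt 2 * sqrt Y" "b2 = - (sgn d / sqrt 2) * sqrt Y"
      by (simp_all add: a1_def a2_def b1_def b2_def Q_def X_def Y_def)
    have "-2 * a1 * b1 + a2 * b2 = sgn d * \<bar>d\<bar> / N"
      unfolding coeffs using XY_nonneg N by (simp add: X_def Y_def field_simps)
    moreover have "a2 * b1 + a1 * b2 = c / N"
      unfolding coeffs using sqrt_XY sgn_sq by (simp add: field_simps power2_eq_square)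
    ultimately show ?thesis by (simp add: sgn_mult_abs)
  qed
  then show "-2 * a1 * b1 + a2 * b2 = d / N" and "a2 * b1 + a1 * b2 = c / N" by blast+
qed

lemma Phi1_eq: "Phi1 r f = sqrt (2 * (norm (cross3 r f))\<^sup>2 + (r \<bullet> f)\<^sup>2)"
  using norm_cross_dot[of r f]
  by (simp add: Phi1_def power_mult_distrib)

lemma frame_coefficients:
  fixes r f :: "real^3"
  assumes "r \<noteq> 0"
  shows "-2 * ax r f * bx r f + ay r f * bycomp r f = (r \<bullet> f) / norm r"
    and "ay r f * bx r f + ax r f * bycomp r f = norm (cross3 r f) / norm r"
    and "cross3 r f = 0 \<Longrightarrow> bycomp r f = 0"
  using planar_coefficients[of "norm r" "norm (cross3 r f)" "r \<bullet> f"] assms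
  by (simp_all add: ax_def ay_def bx_def bycomp_def Phi2_def Phi1_eq)

theorem proposition2:
  fixes r fs :: "real^3"
  assumes "r \<noteq> 0"
  shows "force r (c1 r fs) (c2 r fs) = fs"
proof -
  let ?e = "perp_dir r fs"
  have e_norm: "bycomp r fs * (?e \<bullet> ?e) = bycomp r fs"
    using frame_coefficients(3)[OF assms, of fs] perp_dir_unit[of r fs] by fastforce
  have r_coeff: "-2 * ax r fs * bx r fs + ay r fs * bycomp r fs * (?e \<bullet> ?e) = (r \<bullet> fs) / norm r"
    unfolding mult.assoc[of "ay r fs"] e_norm by (rule frame_coefficients(1)[OF assms])
  have "force r (c1 r fs) (c2 r fs)
      = ((r \<bullet> fs) / norm r / norm r) *\<^sub>R r + (norm (cross3 r fs) / norm r) *\<^sub>R ?e"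
    unfolding c1_eq c2_eq force_in_plane[OF assms perp_dir_orthogonal] r_coeff
      frame_coefficients(2)[OF assms] ..
  also have "\<dots> = fs"
    using orthogonal_decomposition[OF assms, of fs] by (simp add: power2_eq_square)
  finally show ?thesis .
qed

end
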